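(* Let $\varepsilon\in\{1,-1\}$, let $\Sigma\subset\mathbb{M}^2(\varepsilon)\times\mathbb{R}$ be a $K$-surface with height function $h$, and let $\gamma\subset\Sigma$ be a differentiable curve such that either (1) $\gamma$ is contained in a horizontal slice $\mathbb{M}^2(\varepsilon)\times\{t_0\}$, or (2) $\gamma$ is an integral curve of $\nabla h$, the gradient of $h$ with respect to the induced metric $I$. Then $\gamma$ is a line of curvature for the pair $(A,II)$ if and only if $\gamma$ is a line of curvature of $\Sigma$ in the classical sense (for the pair $(I,II)$).
   Context: $\mathbb{M}^2(\varepsilon)$ is $\mathbb{S}^2$ for $\varepsilon=1$ and $\mathbb{H}^2$ for $\varepsilon=-1$. A $K$-surface is an immersed surface with constant Gaussian curvature $K>\max\{0,\varepsilon\}$; $I,II$ are its first and second fundamental forms, $h$ is the restriction of the projection onto $\mathbb{R}$, and $A=I+\frac{\varepsilon}{K-\varepsilon}dh^2$ (a Riemannian metric). For a pair $(A,B)$ with shape operator $S$ given by $B(X,Y)=A(SX,Y)$, lines of curvature are integral curves of the eigendirections of $S$. *)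

theory Defs
  imports "HOL-Analysis.Analysis"
begin

text \<open>Ambient space: M2(eps) x R is modelled inside R^4 = R^3 x R.  For eps = 1,
 M2(1) is the unit sphere of Euclidean R^3; for eps = -1, M2(-1) is the upper sheet of the
 hyperboloid in Minkowski space R^3_1.  The ambient (flat) bilinear form is
 eps*x1*y1 + x2*y2 + x3*y3 + x4*y4; its restriction to M2(eps) x R is the product metric.
 The fourth coordinate is the R factor.\<close>

definition amb :: "real \<Rightarrow> real^4 \<Rightarrow> real^4 \<Rightarrow> real" where
  "amb eps x y = eps * (x$1 * y$1) + x$2 * y$2 + x$3 * y$3 + x$4 * y$4"

definition in_MxR :: "real \<Rightarrow> real^4 \<Rightarrow> bool" where
  "in_MxR eps x \<longleftrightarrow> eps * (x$1)^2 + (x$2)^2 + (x$3)^2 = eps \<and> (eps = -1 \<longrightarrow> x$1 > 0)"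

text \<open>Position vector of the M2(eps) component (normal direction of M2(eps) x R in R^4).\<close>
definition Mpos :: "real^4 \<Rightarrow> real^4" where
  "Mpos x = (\<chi> i. if i = 4 then 0 else x$i)"

definition pd :: "2 \<Rightarrow> (real^2 \<Rightarrow> 'b::real_normed_vector) \<Rightarrow> real^2 \<Rightarrow> 'b" where
  "pd i f p = vector_derivative (\<lambda>s. f (p + s *\<^sub>R axis i 1)) (at 0)"

fun Ck :: "nat \<Rightarrow> (real^2) set \<Rightarrow> (real^2 \<Rightarrow> 'b::real_normed_vector) \<Rightarrow> bool" where
  "Ck 0 U f = continuous_on U f"
| "Ck (Suc k) U f = ((\<forall>p\<in>U. f differentiable (at p)) \<and> (\<forall>i. Ck k U (pd i f)))"

definition smooth_map :: "(real^2) set \<Rightarrow> (real^2 \<Rightarrow> 'b::real_normed_vector) \<Rightarrow> bool" where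
  "smooth_map U f \<longleftrightarrow> (\<forall>k. Ck k U f)"

definition Imat :: "real \<Rightarrow> (real^2 \<Rightarrow> real^4) \<Rightarrow> real^2 \<Rightarrow> real^2^2" where
  "Imat eps X p = (\<chi> i j. amb eps (pd i X p) (pd j X p))"

definition IImat :: "real \<Rightarrow> (real^2 \<Rightarrow> real^4) \<Rightarrow> (real^2 \<Rightarrow> real^4) \<Rightarrow> real^2 \<Rightarrow> real^2^2" where
  "IImat eps X N p = (\<chi> i j. amb eps (pd i (pd j X) p) (N p))"

definition height :: "(real^2 \<Rightarrow> real^4) \<Rightarrow> real^2 \<Rightarrow> real" where
  "height X p = X p $ 4"

definition dh :: "(real^2 \<Rightarrow> real^4) \<Rightarrow> real^2 \<Rightarrow> real^2" where
  "dh X p = (\<chi> i. pd i (height X) p)"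

definition grad_h :: "real \<Rightarrow> (real^2 \<Rightarrow> real^4) \<Rightarrow> real^2 \<Rightarrow> real^2" where
  "grad_h eps X p = matrix_inv (Imat eps X p) *v dh X p"

definition Amat :: "real \<Rightarrow> real \<Rightarrow> (real^2 \<Rightarrow> real^4) \<Rightarrow> real^2 \<Rightarrow> real^2^2" where
  "Amat eps K X p = (\<chi> i j. Imat eps X p $ i $ j + eps / (K - eps) * (dh X p $ i) * (dh X p $ j))"

text \<open>Gaussian (intrinsic) curvature of the induced metric I, via the Brioschi formula.\<close>
definition gauss_curv :: "real \<Rightarrow> (real^2 \<Rightarrow> real^4) \<Rightarrow> real^2 \<Rightarrow> real" where
  "gauss_curv eps X p =
    (let E = (\<lambda>q. Imat eps X q $ 1 $ 1); F = (\<lambda>q. Imat eps X q $ 1 $ 2);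
         G = (\<lambda>q. Imat eps X q $ 2 $ 2);
         e = E p; f = F p; g = G p;
         Eu = pd 1 E p; Ev = pd 2 E p; Fu = pd 1 F p; Fv = pd 2 F p;
         Gu = pd 1 G p; Gv = pd 2 G p;
         Evv = pd 2 (pd 2 E) p; Fuv = pd 2 (pd 1 F) p; Guu = pd 1 (pd 1 G) p;
         a11 = - Evv / 2 + Fuv - Guu / 2; a12 = Eu / 2; a13 = Fu - Ev / 2;
         a21 = Fv - Gu / 2; a31 = Gv / 2;
         d1 = a11 * (e * g - f * f) - a12 * (a21 * g - f * a31) + a13 * (a21 * f - e * a31);
         d2 = - (Ev / 2) * ((Ev / 2) * g - f * (Gu / 2)) + (Gu / 2) * ((Ev / 2) * f - e * (Gu / 2))
     in (d1 - d2) / (e * g - f * f)^2)"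

definition K_surface :: "real \<Rightarrow> real \<Rightarrow> (real^2) set \<Rightarrow> (real^2 \<Rightarrow> real^4) \<Rightarrow> (real^2 \<Rightarrow> real^4) \<Rightarrow> bool" where
  "K_surface eps K U X N \<longleftrightarrow>
     open U \<and> smooth_map U X \<and> (\<forall>p\<in>U. in_MxR eps (X p)) \<and>
     (\<forall>p\<in>U. \<forall>\<alpha> \<beta>. \<alpha> *\<^sub>R pd 1 X p + \<beta> *\<^sub>R pd 2 X p = 0 \<longrightarrow> \<alpha> = 0 \<and> \<beta> = 0) \<and>
     (\<forall>p\<in>U. amb eps (N p) (N p) = 1 \<and> amb eps (N p) (Mpos (X p)) = 0 \<and>
             (\<forall>i. amb eps (N p) (pd i X p) = 0)) \<and>
     (\<forall>p\<in>U. gauss_curv eps X p = K)"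

text \<open>Line of curvature for a pair (A,B): the tangent of the (regular) curve c in the
 parameter domain is at every point an eigenvector of the shape operator S = A^{-1} B,
 i.e. of S defined by B(X,Y) = A(SX,Y).\<close>
definition line_of_curvature ::
  "(real^2 \<Rightarrow> real^2^2) \<Rightarrow> (real^2 \<Rightarrow> real^2^2) \<Rightarrow> (real \<Rightarrow> real^2) \<Rightarrow> real set \<Rightarrow> bool" where
  "line_of_curvature Am Bm c J \<longleftrightarrow>
     (\<forall>t\<in>J. \<exists>mu. (matrix_inv (Am (c t)) ** Bm (c t)) *v vector_derivative c (at t)
                   = mu *\<^sub>R vector_derivative c (at t))"

end

theory Submission
  imports Defs
begin

(* The metric A = I + eps/(K - eps) dh^2 differs from I only in the
   direction dh.  Along a curve of either kind the velocity v satisfies A v = l I v for a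
   scalar l \<noteq> 0: for a horizontal curve dh(v) = 0 and l = 1; for an integral curve of
   grad h we have I v = dh, hence A v = (1 + eps/(K - eps) dh(v)) I v, and l \<noteq> 0 because A
   is positive definite.  Then v is an eigenvector of A^{-1} II iff II v is a multiple of
   A v = l I v iff v is an eigenvector of I^{-1} II. *)

section \<open>Eigenvectors of shape operators\<close>

text \<open>The library defines matrix_inv by choice; for invertible matrices it is a two-sided
  inverse.\<close>
lemma matrix_inv_inverse:
  fixes M :: "real^'n^'n"
  assumes "invertible M"
  shows "M ** matrix_inv M = mat 1" and "matrix_inv M ** M = mat 1"
proof -
  have "M ** matrix_inv M = mat 1 \<and> matrix_inv M ** M = mat 1"
    using assms unfolding invertible_def matrix_inv_def by (rule someI_ex)
  then show "M ** matrix_inv M = mat 1" and "matrix_inv M ** M = mat 1" by blast+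
qed

lemma posdef_invertible:
  fixes M :: "real^'n^'n"
  assumes "\<And>\<alpha>. \<alpha> \<noteq> 0 \<Longrightarrow> 0 < \<alpha> \<bullet> (M *v \<alpha>)"
  shows "invertible M"
proof -
  have "\<forall>x. M *v x = 0 \<longrightarrow> x = 0"
    using assms by (metis inner_zero_right less_irrefl)
  then show ?thesis using invertible_left_inverse matrix_left_invertible_ker(1) by blast
qed

lemma shape_eigenvector_iff:
  fixes M B :: "real^'n^'n"
  assumes M: "invertible M"
  shows "(\<exists>mu. (matrix_inv M ** B) *v v = mu *\<^sub>R v) \<longleftrightarrow> (\<exists>mu. B *v v = mu *\<^sub>R (M *v v))"
proof -
  have "(matrix_inv M ** B) *v v = mu *\<^sub>R v \<longleftrightarrow> B *v v = mu *\<^sub>R (M *v v)" for mu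
  proof
    assume "(matrix_inv M ** B) *v v = mu *\<^sub>R v"
    then have "(M ** matrix_inv M ** B) *v v = M *v (mu *\<^sub>R v)"
      by (simp add: matrix_vector_mul_assoc[symmetric] matrix_mul_assoc)
    then show "B *v v = mu *\<^sub>R (M *v v)"
      by (simp add: matrix_inv_inverse[OF M] matrix_vector_mult_scaleR)
  next
    assume "B *v v = mu *\<^sub>R (M *v v)"
    then have "(matrix_inv M ** B) *v v = (matrix_inv M ** M) *v (mu *\<^sub>R v)"
      by (simp add: matrix_vector_mul_assoc[symmetric] matrix_vector_mult_scaleR)
    then show "(matrix_inv M ** B) *v v = mu *\<^sub>R v"
      by (simp add: matrix_inv_inverse[OF M])
  qed
  then show ?thesis by blast
qed

lemma shape_eigenvector_proportional:
  fixes A I B :: "real^'n^'n"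
  assumes A: "invertible A" and I: "invertible I"
    and proportional: "A *v v = l *\<^sub>R (I *v v)" and l: "l \<noteq> 0"
  shows "(\<exists>mu. (matrix_inv A ** B) *v v = mu *\<^sub>R v) \<longleftrightarrow> (\<exists>mu. (matrix_inv I ** B) *v v = mu *\<^sub>R v)"
proof -
  have "(\<exists>mu. B *v v = mu *\<^sub>R (A *v v)) \<longleftrightarrow> (\<exists>mu. B *v v = mu *\<^sub>R (I *v v))"
  proof
    assume "\<exists>mu. B *v v = mu *\<^sub>R (A *v v)"
    then obtain mu where "B *v v = mu *\<^sub>R (A *v v)" by blast
    then have "B *v v = (mu * l) *\<^sub>R (I *v v)" using proportional by simp
    then show "\<exists>mu. B *v v = mu *\<^sub>R (I *v v)" by blast
  next
    assume "\<exists>mu. B *v v = mu *\<^sub>R (I *v v)"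
    then obtain mu where "B *v v = mu *\<^sub>R (I *v v)" by blast
    then have "B *v v = (mu / l) *\<^sub>R (A *v v)" using proportional l by simp
    then show "\<exists>mu. B *v v = mu *\<^sub>R (A *v v)" by blast
  qed
  then show ?thesis unfolding shape_eigenvector_iff[OF A] shape_eigenvector_iff[OF I] .
qed

section \<open>Tangent vectors of M2(eps) x R\<close>

text \<open>Cauchy-Schwarz for a vector w Lorentz-orthogonal to a point x of the hyperboloid
  x1^2 - x2^2 - x3^2 = 1: the Lorentz norm w2^2 + w3^2 - w1^2 is controlled from below.\<close>
lemma hyperboloid_tangent_estimate:
  fixes x1 x2 x3 w1 w2 w3 :: real
  assumes on_H: "x2^2 + x3^2 = x1^2 - 1" and tangent: "x1 * w1 = x2 * w2 + x3 * w3"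
  shows "w2^2 + w3^2 \<le> x1^2 * (w2^2 + w3^2 - w1^2)"
proof -
  have "(x1 * w1)^2 \<le> (x2^2 + x3^2) * (w2^2 + w3^2)"
    unfolding tangent using zero_le_square[of "x2 * w3 - x3 * w2"]
    by (simp add: power2_eq_square algebra_simps)
  then show ?thesis unfolding on_H by (simp add: power2_eq_square algebra_simps)
qed

text \<open>The ambient form is positive definite on tangent vectors of M2(eps) x R and dominates
  the square of the vertical component; this is what makes I and A Riemannian.\<close>
lemma MxR_tangent_norm:
  assumes eps: "eps = 1 \<or> eps = -1" and x: "in_MxR eps x"
    and w: "amb eps (Mpos x) w = 0"
  shows "(w$4)^2 \<le> amb eps w w" and "w \<noteq> 0 \<Longrightarrow> 0 < amb eps w w"
proof -
  have nz: "w \<noteq> 0 \<longleftrightarrow> w$1 \<noteq> 0 \<or> w$2 \<noteq> 0 \<or> w$3 \<noteq> 0 \<or> w$4 \<noteq> 0"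
    by (auto simp: vec_eq_iff forall_4)
  have "(w$4)^2 \<le> amb eps w w \<and> (w \<noteq> 0 \<longrightarrow> 0 < amb eps w w)"
    using eps
  proof
    assume "eps = 1"
    then have "amb eps w w = (w$1)^2 + (w$2)^2 + (w$3)^2 + (w$4)^2"
      by (simp add: amb_def power2_eq_square)
    then show ?thesis using nz by (auto simp: add_pos_nonneg add_nonneg_pos)
  next
    assume e: "eps = -1"
    have x1: "x$1 > 0" and on_H: "(x$2)^2 + (x$3)^2 = (x$1)^2 - 1"
      using x e by (auto simp: in_MxR_def)
    have "x$1 * w$1 = x$2 * w$2 + x$3 * w$3"
      using w e by (simp add: amb_def Mpos_def)
    note est = hyperboloid_tangent_estimate[OF on_H this]
    have space: "(w$2)^2 + (w$3)^2 - (w$1)^2 \<ge> 0"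
      using est x1 by (smt (verit) mult_pos_neg zero_le_power2 zero_less_power)
    have amb: "amb eps w w = (w$2)^2 + (w$3)^2 - (w$1)^2 + (w$4)^2"
      using e by (simp add: amb_def power2_eq_square)
    have "w = 0" if "amb eps w w \<le> 0"
    proof -
      have null: "(w$2)^2 + (w$3)^2 - (w$1)^2 = 0" and "(w$4)^2 = 0"
        using that space amb zero_le_power2[of "w$4"] by linarith+
      then have "w$4 = 0" by simp
      have "(w$2)^2 + (w$3)^2 \<le> 0" using est null by simp
      then have "(w$2)^2 = 0" "(w$3)^2 = 0"
        using zero_le_power2[of "w$2"] zero_le_power2[of "w$3"] by linarith+
      then have "w$2 = 0" "w$3 = 0" by simp_all
      then have "w$1 = 0" using \<open>x$1 * w$1 = _\<close> x1 by simp
      then show "w = 0" using nz \<open>w$2 = 0\<close> \<open>w$3 = 0\<close> \<open>w$4 = 0\<close> by blast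
    qed
    then show ?thesis using space amb by force
  qed
  then show "(w$4)^2 \<le> amb eps w w" and "w \<noteq> 0 \<Longrightarrow> 0 < amb eps w w" by blast+
qed

text \<open>The scalar inequality behind positivity of A: for eps = -1 the correction
  -dh^2/(K+1) is strictly smaller than I, since dh^2 \<le> I.\<close>
lemma correction_preserves_positivity:
  fixes eps K q d :: real
  assumes eps: "eps = 1 \<or> eps = -1" and K: "K > max 0 eps"
    and dq: "d^2 \<le> q" and q: "0 < q"
  shows "0 < q + eps / (K - eps) * d^2"
  using eps
proof
  assume "eps = 1"
  then show ?thesis using K q by (simp add: add_pos_nonneg)
next
  assume e: "eps = -1"
  have "d^2 / (K + 1) < q"
  proof -
    have "d^2 / (K + 1) \<le> q / (K + 1)" using dq K by (simp add: divide_right_mono)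
    also have "\<dots> < q" using q K by (simp add: divide_less_eq)
    finally show ?thesis .
  qed
  then show ?thesis using e by simp
qed

lemma has_derivative_nth:
  assumes "(f has_derivative D) (at p)"
  shows "((\<lambda>q. f q $ k) has_derivative (\<lambda>h. D h $ k)) (at p)"
  using bounded_linear.has_derivative[OF bounded_linear_vec_nth assms] .

lemma pd_has_derivative:
  fixes f :: "real^2 \<Rightarrow> 'b::real_normed_vector"
  assumes "(f has_derivative D) (at p)"
  shows "pd i f p = D (axis i 1)"
proof -
  have line: "((\<lambda>s. p + s *\<^sub>R axis i 1) has_derivative (\<lambda>s. s *\<^sub>R axis i 1)) (at 0)"
    by (auto intro!: derivative_eq_intros)
  have "((\<lambda>s. f (p + s *\<^sub>R axis i 1)) has_derivative (\<lambda>s. D (s *\<^sub>R axis i 1))) (at 0)"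
    using has_derivative_compose[OF line] assms by simp
  then have "((\<lambda>s. f (p + s *\<^sub>R axis i 1)) has_vector_derivative D (axis i 1)) (at 0)"
    using linear_scale[OF has_derivative_linear[OF assms]] by (simp add: has_vector_derivative_def)
  then show ?thesis unfolding pd_def by (rule vector_derivative_at)
qed

definition tangent_vec :: "(real^2 \<Rightarrow> real^4) \<Rightarrow> real^2 \<Rightarrow> real^2 \<Rightarrow> real^4" where
  "tangent_vec X p \<alpha> = \<alpha>$1 *\<^sub>R pd 1 X p + \<alpha>$2 *\<^sub>R pd 2 X p"

lemma derivative_eq_tangent_vec:
  assumes D: "(X has_derivative D) (at p)"
  shows "D \<alpha> = tangent_vec X p \<alpha>"
proof -
  have lin: "linear D" using D by (rule has_derivative_linear)
  have "\<alpha> = \<alpha>$1 *\<^sub>R axis 1 1 + \<alpha>$2 *\<^sub>R axis 2 1"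
    by (auto simp: vec_eq_iff forall_2 axis_def)
  then have "D \<alpha> = D (\<alpha>$1 *\<^sub>R axis 1 1 + \<alpha>$2 *\<^sub>R axis 2 1)"
    by (rule arg_cong)
  also have "\<dots> = \<alpha>$1 *\<^sub>R D (axis 1 1) + \<alpha>$2 *\<^sub>R D (axis 2 1)"
    by (simp add: linear_add[OF lin] linear_scale[OF lin])
  finally show ?thesis by (simp add: tangent_vec_def pd_has_derivative[OF D])
qed

lemma dh_inner:
  assumes D: "(X has_derivative D) (at p)"
  shows "dh X p \<bullet> \<alpha> = tangent_vec X p \<alpha> $ 4"
proof -
  have "(height X has_derivative (\<lambda>h. D h $ 4)) (at p)"
    unfolding height_def[abs_def] by (rule has_derivative_nth[OF D])
  then have "dh X p $ i = pd i X p $ 4" for i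
    using pd_has_derivative[OF D] pd_has_derivative by (simp add: dh_def)
  then show ?thesis by (simp add: inner_vec_def sum_2 tangent_vec_def algebra_simps)
qed

text \<open>The differential of a map into M2(eps) x R is orthogonal to the position vector of
  the M2(eps) factor (differentiate the defining equation).\<close>
lemma tangent_to_MxR:
  assumes D: "(X has_derivative D) (at p)" and U: "open U" "p \<in> U"
    and M: "\<forall>q\<in>U. in_MxR eps (X q)"
  shows "amb eps (Mpos (X p)) (D h) = 0"
proof -
  let ?F = "\<lambda>q. eps * (X q $ 1)^2 + (X q $ 2)^2 + (X q $ 3)^2"
  have "(?F has_derivative (\<lambda>h. 2 * amb eps (Mpos (X p)) (D h))) (at p)"
    by (auto intro!: derivative_eq_intros has_derivative_nth[OF D]
        simp: amb_def Mpos_def algebra_simps)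
  then have "((\<lambda>q. eps) has_derivative (\<lambda>h. 2 * amb eps (Mpos (X p)) (D h))) (at p)"
    by (rule has_derivative_transform_within_open[OF _ U]) (use M in \<open>simp add: in_MxR_def\<close>)
  then have "(\<lambda>h. 2 * amb eps (Mpos (X p)) (D h)) = (\<lambda>h. 0)"
    using has_derivative_unique[OF _ has_derivative_const] by blast
  then show ?thesis by (metis mult_eq_0_iff zero_neq_numeral)
qed

section \<open>The metrics I and A on a K-surface\<close>

lemma K_surface_differentiable:
  assumes "K_surface eps K U X N" "p \<in> U"
  shows "X differentiable (at p)"
proof -
  have "Ck (Suc 0) U X" using assms(1) unfolding K_surface_def smooth_map_def by blast
  then show ?thesis using assms(2) by simp
qed

lemma Imat_quadratic:
  "\<alpha> \<bullet> (Imat eps X p *v \<alpha>) = amb eps (tangent_vec X p \<alpha>) (tangent_vec X p \<alpha>)"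
  unfolding inner_vec_def matrix_vector_mult_def sum_2 tangent_vec_def
  by (simp add: Imat_def amb_def algebra_simps)

lemma Amat_apply:
  "Amat eps K X p *v \<alpha> = Imat eps X p *v \<alpha> + (eps / (K - eps) * (dh X p \<bullet> \<alpha>)) *\<^sub>R dh X p"
  unfolding Amat_def
  by (simp add: vec_eq_iff matrix_vector_mult_def inner_vec_def sum_2 algebra_simps)

lemma K_surface_tangent_norm:
  assumes eps: "eps = 1 \<or> eps = -1" and surf: "K_surface eps K U X N" and p: "p \<in> U"
  shows "(tangent_vec X p \<alpha> $ 4)^2 \<le> amb eps (tangent_vec X p \<alpha>) (tangent_vec X p \<alpha>)"
    and "\<alpha> \<noteq> 0 \<Longrightarrow> 0 < amb eps (tangent_vec X p \<alpha>) (tangent_vec X p \<alpha>)"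
proof -
  obtain D where D: "(X has_derivative D) (at p)"
    using K_surface_differentiable[OF surf p] unfolding differentiable_def by blast
  have U: "open U" and M: "\<forall>q\<in>U. in_MxR eps (X q)"
    and imm: "\<forall>\<alpha> \<beta>. \<alpha> *\<^sub>R pd 1 X p + \<beta> *\<^sub>R pd 2 X p = 0 \<longrightarrow> \<alpha> = 0 \<and> \<beta> = 0"
    using surf p unfolding K_surface_def by blast+
  have orth: "amb eps (Mpos (X p)) (tangent_vec X p \<alpha>) = 0"
    using tangent_to_MxR[OF D U p M] by (simp add: derivative_eq_tangent_vec[OF D])
  note norm = MxR_tangent_norm[OF eps M[rule_format, OF p] orth]
  show "(tangent_vec X p \<alpha> $ 4)^2 \<le> amb eps (tangent_vec X p \<alpha>) (tangent_vec X p \<alpha>)"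
    by (rule norm(1))
  assume "\<alpha> \<noteq> 0"
  then have "\<alpha>$1 \<noteq> 0 \<or> \<alpha>$2 \<noteq> 0" by (auto simp: vec_eq_iff forall_2)
  then have "tangent_vec X p \<alpha> \<noteq> 0" using imm unfolding tangent_vec_def by blast
  then show "0 < amb eps (tangent_vec X p \<alpha>) (tangent_vec X p \<alpha>)" by (rule norm(2))
qed

lemma Imat_posdef:
  assumes "eps = 1 \<or> eps = -1" "K_surface eps K U X N" "p \<in> U" "\<alpha> \<noteq> 0"
  shows "0 < \<alpha> \<bullet> (Imat eps X p *v \<alpha>)"
  using K_surface_tangent_norm(2)[OF assms] by (simp add: Imat_quadratic)

text \<open>A(\<alpha>,\<alpha>) = I(\<alpha>,\<alpha>) + eps/(K-eps) dh(\<alpha>)^2 with dh(\<alpha>)^2 \<le> I(\<alpha>,\<alpha>): A is a Riemannian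
  metric (this uses K > max 0 eps).\<close>
lemma Amat_posdef:
  assumes eps: "eps = 1 \<or> eps = -1" and K: "K > max 0 eps"
    and surf: "K_surface eps K U X N" and p: "p \<in> U" and nz: "\<alpha> \<noteq> 0"
  shows "0 < \<alpha> \<bullet> (Amat eps K X p *v \<alpha>)"
proof -
  obtain D where D: "(X has_derivative D) (at p)"
    using K_surface_differentiable[OF surf p] unfolding differentiable_def by blast
  let ?w = "tangent_vec X p \<alpha>"
  have "\<alpha> \<bullet> (Amat eps K X p *v \<alpha>) = amb eps ?w ?w + eps / (K - eps) * (?w $ 4)^2"
    unfolding Amat_apply inner_add_right inner_scaleR_right Imat_quadratic
    using dh_inner[OF D, of \<alpha>] by (simp add: inner_commute power2_eq_square)
  then show ?thesis
    using correction_preserves_positivity[OF eps K K_surface_tangent_norm[OF eps surf p]] nz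
    by simp
qed

section \<open>Curves along which A and I are proportional\<close>

lemma height_along_curve:
  assumes X: "X differentiable (at (c t))" and c: "(c has_vector_derivative v) (at t)"
  shows "((\<lambda>s. height X (c s)) has_real_derivative (dh X (c t) \<bullet> v)) (at t)"
proof -
  obtain D where D: "(X has_derivative D) (at (c t))"
    using X unfolding differentiable_def by blast
  have "((\<lambda>s. X (c s)) has_derivative (\<lambda>h. D (h *\<^sub>R v))) (at t)"
    using has_derivative_compose[OF c[unfolded has_vector_derivative_def] D] .
  then have "((\<lambda>s. X (c s) $ 4) has_derivative (\<lambda>h. D (h *\<^sub>R v) $ 4)) (at t)"
    by (rule has_derivative_nth)
  moreover have "(\<lambda>h. D (h *\<^sub>R v) $ 4) = (*) (dh X (c t) \<bullet> v)"
    using linear_scale[OF has_derivative_linear[OF D]]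
    by (simp add: dh_inner[OF D] derivative_eq_tangent_vec[OF D] fun_eq_iff mult.commute)
  ultimately show ?thesis
    by (simp add: has_field_derivative_def height_def)
qed

text \<open>Case (1): on a horizontal curve dh(c') = 0, so A and I agree on c'.\<close>
lemma horizontal_curve_metrics_agree:
  assumes X: "X differentiable (at (c t))" and c: "(c has_vector_derivative v) (at t)"
    and t: "t \<in> {a<..<b}" and level: "\<forall>s\<in>{a<..<b}. height X (c s) = t0"
  shows "Amat eps K X (c t) *v v = Imat eps X (c t) *v v"
proof -
  have "dh X (c t) \<bullet> v = 0"
  proof (rule DERIV_local_const[OF height_along_curve[OF X c]])
    show "0 < min (t - a) (b - t)" using t by simp
    show "\<forall>y. \<bar>t - y\<bar> < min (t - a) (b - t) \<longrightarrow> height X (c t) = height X (c y)"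
      using level t by (auto simp: abs_less_iff)
  qed
  then show ?thesis by (simp add: Amat_apply)
qed

text \<open>Case (2): if v = grad h = I^{-1} dh then I v = dh and A v = (1 + eps/(K-eps) dh(v)) I v;
  the factor is nonzero since A is positive definite.\<close>
lemma gradient_metrics_proportional:
  assumes I: "invertible (Imat eps X p)"
    and A: "\<And>\<alpha>. \<alpha> \<noteq> 0 \<Longrightarrow> 0 < \<alpha> \<bullet> (Amat eps K X p *v \<alpha>)"
    and v: "v = grad_h eps X p" and nz: "v \<noteq> 0"
  obtains l where "l \<noteq> 0" and "Amat eps K X p *v v = l *\<^sub>R (Imat eps X p *v v)"
proof
  define l where "l = 1 + eps / (K - eps) * (dh X p \<bullet> v)"
  have "Imat eps X p *v v = dh X p"
    unfolding v grad_h_def by (simp add: matrix_vector_mul_assoc matrix_inv_inverse[OF I])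
  then show Av: "Amat eps K X p *v v = l *\<^sub>R (Imat eps X p *v v)"
    by (simp add: Amat_apply l_def algebra_simps)
  show "l \<noteq> 0"
  proof
    assume "l = 0"
    then have "v \<bullet> (Amat eps K X p *v v) = 0" using Av by simp
    then show False using A[OF nz] by simp
  qed
qed

lemma curve_metrics_proportional:
  assumes eps: "eps = 1 \<or> eps = -1" and K: "K > max 0 eps"
    and surf: "K_surface eps K U X N" and p: "c t \<in> U" and t: "t \<in> {a<..<b}"
    and cv: "(c has_vector_derivative v) (at t)" and v_nz: "v \<noteq> 0"
    and cases: "(\<exists>t0. \<forall>s\<in>{a<..<b}. height X (c s) = t0)
             \<or> (\<forall>s\<in>{a<..<b}. (c has_vector_derivative grad_h eps X (c s)) (at s))"
  obtains l where "l \<noteq> 0" and "Amat eps K X (c t) *v v = l *\<^sub>R (Imat eps X (c t) *v v)"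
  using cases
proof
  assume "\<exists>t0. \<forall>s\<in>{a<..<b}. height X (c s) = t0"
  then obtain t0 where "\<forall>s\<in>{a<..<b}. height X (c s) = t0" by blast
  from horizontal_curve_metrics_agree[OF K_surface_differentiable[OF surf p] cv t this]
  show thesis by (intro that[of 1]) simp_all
next
  assume "\<forall>s\<in>{a<..<b}. (c has_vector_derivative grad_h eps X (c s)) (at s)"
  then have "(c has_vector_derivative grad_h eps X (c t)) (at t)" using t by blast
  then have grad: "v = grad_h eps X (c t)" by (rule vector_derivative_unique_at[OF cv])
  have iI: "invertible (Imat eps X (c t))"
    by (rule posdef_invertible) (rule Imat_posdef[OF eps surf p])
  show thesis
    using gradient_metrics_proportional[OF iI Amat_posdef[OF eps K surf p] grad v_nz] that
    by blast
qed

theorem lemma3: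
  fixes eps K a b :: real and U :: "(real^2) set" and X N :: "real^2 \<Rightarrow> real^4"
    and c :: "real \<Rightarrow> real^2"
  assumes eps: "eps = 1 \<or> eps = -1"
    and K: "K > max 0 eps"
    and surf: "K_surface eps K U X N"
    and ab: "a < b"
    and inU: "\<forall>t\<in>{a<..<b}. c t \<in> U"
    and diff: "\<forall>t\<in>{a<..<b}. c differentiable (at t)"
    and reg: "\<forall>t\<in>{a<..<b}. vector_derivative c (at t) \<noteq> 0"
    and cases: "(\<exists>t0. \<forall>t\<in>{a<..<b}. height X (c t) = t0)
             \<or> (\<forall>t\<in>{a<..<b}. (c has_vector_derivative grad_h eps X (c t)) (at t))"
  shows "line_of_curvature (Amat eps K X) (IImat eps X N) c {a<..<b}
     \<longleftrightarrow> line_of_curvature (Imat eps X) (IImat eps X N) c {a<..<b}"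
proof -
  have pointwise:
    "(\<exists>mu. (matrix_inv (Amat eps K X (c t)) ** IImat eps X N (c t)) *v v = mu *\<^sub>R v) \<longleftrightarrow>
     (\<exists>mu. (matrix_inv (Imat eps X (c t)) ** IImat eps X N (c t)) *v v = mu *\<^sub>R v)"
    if t: "t \<in> {a<..<b}" and v: "v = vector_derivative c (at t)" for t v
  proof -
    have p: "c t \<in> U" using inU t by blast
    have cv: "(c has_vector_derivative v) (at t)"
      using diff t unfolding v vector_derivative_works by blast
    have v_nz: "v \<noteq> 0" using reg t v by simp
    obtain l where l: "l \<noteq> 0" and Av: "Amat eps K X (c t) *v v = l *\<^sub>R (Imat eps X (c t) *v v)"
      by (rule curve_metrics_proportional[OF eps K surf p t cv v_nz cases])
    have iA: "invertible (Amat eps K X (c t))"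
      by (rule posdef_invertible) (rule Amat_posdef[OF eps K surf p])
    have iI: "invertible (Imat eps X (c t))"
      by (rule posdef_invertible) (rule Imat_posdef[OF eps surf p])
    show ?thesis by (rule shape_eigenvector_proportional[OF iA iI Av l])
  qed
  show ?thesis unfolding line_of_curvature_def by (intro ball_cong refl pointwise)
qed

end
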